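(* For every integer constant $c\ge 1$ and every $h>1/2$ there is an instance with two groups of binary agents in which no allocation is $h$-democratic PROP$c$, and no allocation is $h$-democratic EF$c$.
   Context: There is a finite set $G$ of goods and two groups $A_1,A_2$ of agents, with $n_i\ge1$ agents in $A_i$. A binary agent has an additive utility $u_a$ with $u_a(\{g\})\in\{0,1\}$. An allocation is a partition $(G_1,G_2)$ of $G$; each agent of $A_i$ gets $u_a(G_i)$. For $a\in A_i$ and integer $c\ge0$: the allocation is EF$c$ for $a$ if for every $i'$ there is $C\subseteq G_{i'}$, $|C|\le c$, with $u_a(G_i)\ge u_a(G_{i'}\setminus C)$; it is PROP$c$ for $a$ if there is $C\subseteq G\setminus G_i$, $|C|\le c$, with $u_a(G_i)\ge\frac12 u_a(G\setminus C)$. An allocation is $h$-democratic fair if for each $i$ at least $h\cdot n_i$ agents of $A_i$ find it fair. *)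

theory Defs
  imports Complex_Main
begin

(* Goods and agents are represented by natural numbers; u a g is the utility
   of agent a for the single good g. *)

definition binary_utils :: "(nat \<Rightarrow> nat \<Rightarrow> nat) \<Rightarrow> nat set \<Rightarrow> nat set \<Rightarrow> bool" where
  "binary_utils u A G \<longleftrightarrow> (\<forall>a\<in>A. \<forall>g\<in>G. u a g \<in> {0, 1})"

definition util :: "(nat \<Rightarrow> nat \<Rightarrow> nat) \<Rightarrow> nat \<Rightarrow> nat set \<Rightarrow> real" where
  "util u a S = real (\<Sum>g\<in>S. u a g)"

definition is_allocation :: "nat set \<Rightarrow> nat set \<Rightarrow> nat set \<Rightarrow> bool" where
  "is_allocation G G1 G2 \<longleftrightarrow> G1 \<union> G2 = G \<and> G1 \<inter> G2 = {}"

(* EFc for agent a owning bundle Gi when the other group owns Go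
   (the condition for i' = i is trivial with C = {}) *)
definition EFc :: "nat \<Rightarrow> (nat \<Rightarrow> nat \<Rightarrow> nat) \<Rightarrow> nat \<Rightarrow> nat set \<Rightarrow> nat set \<Rightarrow> bool" where
  "EFc c u a Gi Go \<longleftrightarrow> (\<exists>C. C \<subseteq> Go \<and> card C \<le> c \<and> util u a Gi \<ge> util u a (Go - C))"

definition PROPc :: "nat \<Rightarrow> (nat \<Rightarrow> nat \<Rightarrow> nat) \<Rightarrow> nat \<Rightarrow> nat set \<Rightarrow> nat set \<Rightarrow> bool" where
  "PROPc c u a Gi Go \<longleftrightarrow>
     (\<exists>C. C \<subseteq> (Gi \<union> Go) - Gi \<and> card C \<le> c \<and> util u a Gi \<ge> (1/2) * util u a ((Gi \<union> Go) - C))"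

definition democratic_fair ::
  "(nat \<Rightarrow> nat set \<Rightarrow> nat set \<Rightarrow> bool) \<Rightarrow> real \<Rightarrow> nat set \<Rightarrow> nat set \<Rightarrow> nat set \<Rightarrow> nat set \<Rightarrow> bool" where
  "democratic_fair F h A1 A2 G1 G2 \<longleftrightarrow>
     real (card {a\<in>A1. F a G1 G2}) \<ge> h * real (card A1) \<and>
     real (card {a\<in>A2. F a G2 G1}) \<ge> h * real (card A2)"

end

theory Submission
  imports Defs "HOL-Library.Nat_Bijection"
begin

text \<open>Take N goods and, for every set S of goods, one agent in each group who values exactly the
goods in S. With binary utilities and two groups, PROPc coincides with EFc, and the group-1 agent
of S is EFc iff |G2 \<inter> S| \<le> |G1 \<inter> S| + c. Every S satisfies its agent in at least one of the
groups, so the numbers of satisfied agents in the two groups sum to at most 2^N plus the number of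
S satisfied in both, i.e. of imbalance at most c. The map S \<mapsto> S \<triangle> G2 is injective and turns
this imbalance into the distance of |S \<triangle> G2| from |G2|, so there are at most
(2c + 1) (N choose N/2) such S. As (2n choose n) = O(4^n / \<surd>n), this is eventually below
(2h - 1) 2^N for N = 2n, whereas h-democratic fairness would need 2h 2^N satisfied agents.\<close>

lemma Suc_times_central_binomial:
  "Suc n * ((2 * Suc n) choose Suc n) = 2 * (2 * n + 1) * ((2 * n) choose n)"
proof -
  have "(2 * Suc n) choose Suc n = (Suc (2 * n) choose n) + (Suc (2 * n) choose Suc n)"
    by simp
  moreover have "Suc (2 * n) choose n = Suc (2 * n) choose Suc n"
    using binomial_symmetric[of "Suc n" "Suc (2 * n)"] by simp
  moreover have "Suc (2 * n) * ((2 * n) choose n) = (Suc (2 * n) choose Suc n) * Suc n"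
    by (rule Suc_times_binomial_eq)
  ultimately show ?thesis by (simp add: algebra_simps)
qed

lemma central_binomial_square_bound: "((2 * n) choose n)\<^sup>2 * (2 * n + 1) \<le> 16 ^ n"
proof (induction n)
  case 0
  then show ?case by simp
next
  case (Suc n)
  define b where "b = (2 * n) choose n"
  define b' where "b' = (2 * Suc n) choose Suc n"
  have step: "Suc n * b' = 2 * (2 * n + 1) * b"
    unfolding b_def b'_def by (rule Suc_times_central_binomial)
  have "(Suc n)\<^sup>2 * (b'\<^sup>2 * (2 * Suc n + 1)) = 4 * (2 * n + 3) * (2 * n + 1) * (b\<^sup>2 * (2 * n + 1))"
    using arg_cong[OF step, of "\<lambda>x. x\<^sup>2 * (2 * n + 3)"] by (simp add: power2_eq_square algebra_simps)
  also have "\<dots> \<le> 4 * (2 * n + 3) * (2 * n + 1) * 16 ^ n"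
    using Suc.IH unfolding b_def by simp
  also have "\<dots> \<le> (Suc n)\<^sup>2 * 16 ^ Suc n"
    by (simp add: power2_eq_square algebra_simps)
  finally show ?case
    unfolding b'_def by (simp del: power_Suc)
qed

lemma exists_central_binomial_small:
  fixes K :: nat and e :: real
  assumes "e > 0"
  shows "\<exists>n. real K * real ((2 * n) choose n) < e * 4 ^ n"
proof -
  obtain n :: nat where n: "(real K)\<^sup>2 / e\<^sup>2 < real n"
    using reals_Archimedean2 by blast
  define B where "B = real ((2 * n) choose n)"
  have B: "B\<^sup>2 * real (2 * n + 1) \<le> 16 ^ n"
    using central_binomial_square_bound[of n] unfolding B_def
    by (metis of_nat_le_iff of_nat_mult of_nat_numeral of_nat_power)
  have "(real K)\<^sup>2 < e\<^sup>2 * n"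
    using n assms by (simp add: pos_divide_less_eq mult.commute)
  also have "\<dots> \<le> e\<^sup>2 * real (2 * n + 1)"
    by (intro mult_left_mono) auto
  finally have K: "(real K)\<^sup>2 < e\<^sup>2 * real (2 * n + 1)" .
  have four_pow_sq: "((4::real) ^ n)\<^sup>2 = 16 ^ n"
    unfolding power2_eq_square power_mult_distrib[symmetric] by simp
  have "(real K * B)\<^sup>2 * real (2 * n + 1) = (real K)\<^sup>2 * (B\<^sup>2 * real (2 * n + 1))"
    by (simp add: power_mult_distrib)
  also have "\<dots> \<le> (real K)\<^sup>2 * 16 ^ n"
    using B by (intro mult_left_mono) auto
  also have "\<dots> < e\<^sup>2 * real (2 * n + 1) * 16 ^ n"
    using K by (intro mult_strict_right_mono) auto
  also have "\<dots> = (e * 4 ^ n)\<^sup>2 * real (2 * n + 1)"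
    by (simp only: power_mult_distrib four_pow_sq mult_ac)
  finally have "(real K * B)\<^sup>2 < (e * 4 ^ n)\<^sup>2"
    by (simp only: mult_less_cancel_right)
  then have "real K * B < e * 4 ^ n"
    by (rule power_less_imp_less_base) (use assms in simp)
  then show ?thesis
    unfolding B_def by blast
qed

lemma util_indicator:
  assumes "\<And>g. u a g = (if g \<in> S then 1 else 0)" and "finite X"
  shows "util u a X = real (card (X \<inter> S))"
  using assms by (simp add: util_def sum.If_cases)

lemma EFc_indicator_iff:
  assumes u: "\<And>g. u a g = (if g \<in> S then 1 else 0)" and "finite X" "finite Y"
  shows "EFc c u a X Y \<longleftrightarrow> card (Y \<inter> S) \<le> card (X \<inter> S) + c"
proof -
  have util: "util u a Z = real (card (Z \<inter> S))" if "finite Z" for Z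
    using util_indicator[of u a S, OF u that] .
  show ?thesis
  proof
    assume "EFc c u a X Y"
    then obtain C where C: "C \<subseteq> Y" "card C \<le> c" "util u a (Y - C) \<le> util u a X"
      unfolding EFc_def by blast
    have "finite C" using C(1) \<open>finite Y\<close> by (rule finite_subset)
    have "Y \<inter> S \<subseteq> ((Y - C) \<inter> S) \<union> C" by blast
    then have "card (Y \<inter> S) \<le> card ((Y - C) \<inter> S) + card C"
      using \<open>finite Y\<close> \<open>finite C\<close> by (meson card_Un_le card_mono finite_Diff finite_Int finite_UnI le_trans)
    moreover have "card ((Y - C) \<inter> S) \<le> card (X \<inter> S)"
      using C(3) assms(2,3) by (simp add: util)
    ultimately show "card (Y \<inter> S) \<le> card (X \<inter> S) + c" using C(2) by linarith
  next
    assume bound: "card (Y \<inter> S) \<le> card (X \<inter> S) + c"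
    obtain C where C: "C \<subseteq> Y \<inter> S" "card C = min c (card (Y \<inter> S))"
      using obtain_subset_with_card_n[OF min.cobounded2[of c "card (Y \<inter> S)"]] by blast
    have "finite C" using C(1) \<open>finite Y\<close> finite_subset by blast
    have "(Y - C) \<inter> S = (Y \<inter> S) - C" by blast
    then have "card ((Y - C) \<inter> S) = card (Y \<inter> S) - min c (card (Y \<inter> S))"
      using C \<open>finite C\<close> by (simp add: card_Diff_subset)
    then have "util u a (Y - C) \<le> util u a X"
      using bound assms(2,3) by (simp add: util)
    then show "EFc c u a X Y" unfolding EFc_def using C by (intro exI[of _ C]) auto
  qed
qed

lemma PROPc_iff_EFc:
  assumes "X \<inter> Y = {}" "finite X" "finite Y"
  shows "PROPc c u a X Y \<longleftrightarrow> EFc c u a X Y"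
proof -
  have split: "util u a (X \<union> Y - C) = util u a X + util u a (Y - C)" if "C \<subseteq> Y" for C
  proof -
    have "X \<union> Y - C = X \<union> (Y - C)" "X \<inter> (Y - C) = {}" using that assms(1) by blast+
    then show ?thesis unfolding util_def using assms(2,3) by (simp add: sum.union_disjoint)
  qed
  have "X \<union> Y - X = Y" using assms(1) by blast
  moreover have "util u a (X \<union> Y - C) / 2 \<le> util u a X \<longleftrightarrow> util u a (Y - C) \<le> util u a X"
    if "C \<subseteq> Y" for C
    using split[OF that] by linarith
  ultimately show ?thesis unfolding PROPc_def EFc_def by auto
qed

lemma card_subsets_with_card_in:
  assumes "finite G" "finite K"
  shows "card {T \<in> Pow G. card T \<in> K} \<le> card K * (card G choose (card G div 2))"
proof -
  have "{T \<in> Pow G. card T \<in> K} = (\<Union>k\<in>K. {T. T \<subseteq> G \<and> card T = k})" by blast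
  then have "card {T \<in> Pow G. card T \<in> K} \<le> (\<Sum>k\<in>K. card {T. T \<subseteq> G \<and> card T = k})"
    using card_UN_le[OF \<open>finite K\<close>] by simp
  also have "\<dots> = (\<Sum>k\<in>K. card G choose k)"
    using n_subsets[OF \<open>finite G\<close>] by simp
  also have "\<dots> \<le> (\<Sum>k\<in>K. card G choose (card G div 2))"
    by (intro sum_mono binomial_maximum)
  finally show ?thesis by simp
qed

lemma card_sym_diff:
  assumes "finite S" "finite B"
  shows "card ((S - B) \<union> (B - S)) + card (B \<inter> S) = card (S - B) + card B"
proof -
  have "card ((S - B) \<union> (B - S)) = card (S - B) + card (B - S)"
    using assms by (intro card_Un_disjoint) auto
  moreover have "card (B - S) + card (B \<inter> S) = card B"
    using assms by (metis card_Diff_subset_Int card_mono inf_le1 le_add_diff_inverse2 finite_Int)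
  ultimately show ?thesis by simp
qed

lemma card_near_balanced_subsets_le:
  assumes "finite G" "G1 \<union> G2 = G" "G1 \<inter> G2 = {}"
  shows "card {S \<in> Pow G. card (G2 \<inter> S) \<le> card (G1 \<inter> S) + c \<and> card (G1 \<inter> S) \<le> card (G2 \<inter> S) + c}
           \<le> (2 * c + 1) * (card G choose (card G div 2))"
    (is "card ?B \<le> _")
proof -
  define flip where "flip S = (S - G2) \<union> (G2 - S)" for S
  have "inj flip"
    by (rule inj_on_inverseI[where g = flip]) (auto simp: flip_def)
  have "flip ` ?B \<subseteq> {T \<in> Pow G. card T \<in> {card G2 - c..card G2 + c}}"
  proof
    fix T assume "T \<in> flip ` ?B"
    then obtain S where S: "S \<in> ?B" "T = flip S" by blast
    have "S - G2 = G1 \<inter> S" using S(1) assms(2,3) by blast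
    then have "card T + card (G2 \<inter> S) = card (G1 \<inter> S) + card G2"
      using card_sym_diff[of S G2] S assms finite_subset unfolding flip_def by auto
    moreover have "T \<subseteq> G" using S assms(2) unfolding flip_def by auto
    ultimately show "T \<in> {T \<in> Pow G. card T \<in> {card G2 - c..card G2 + c}}" using S(1) by auto
  qed
  then have "card (flip ` ?B) \<le> card {T \<in> Pow G. card T \<in> {card G2 - c..card G2 + c}}"
    using \<open>finite G\<close> by (intro card_mono) auto
  also have "\<dots> \<le> (2 * c + 1) * (card G choose (card G div 2))"
    using card_subsets_with_card_in[OF \<open>finite G\<close>, of "{card G2 - c..card G2 + c}"]
    by (rule order_trans[OF _ mult_right_mono]) auto
  finally show ?thesis
    using card_image[OF inj_on_subset[OF \<open>inj flip\<close>]] by simp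
qed

lemma card_bounded_imbalance_subsets_sum_le:
  assumes "finite G" "G1 \<union> G2 = G" "G1 \<inter> G2 = {}"
  shows "card {S \<in> Pow G. card (G2 \<inter> S) \<le> card (G1 \<inter> S) + c}
           + card {S \<in> Pow G. card (G1 \<inter> S) \<le> card (G2 \<inter> S) + c}
         \<le> 2 ^ card G + (2 * c + 1) * (card G choose (card G div 2))"
proof -
  let ?F1 = "{S \<in> Pow G. card (G2 \<inter> S) \<le> card (G1 \<inter> S) + c}"
  let ?F2 = "{S \<in> Pow G. card (G1 \<inter> S) \<le> card (G2 \<inter> S) + c}"
  have "card ?F1 + card ?F2 = card (?F1 \<union> ?F2) + card (?F1 \<inter> ?F2)"
    using \<open>finite G\<close> by (intro card_Un_Int) auto
  moreover have "?F1 \<union> ?F2 = Pow G" by auto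
  moreover have "?F1 \<inter> ?F2 = {S \<in> Pow G. card (G2 \<inter> S) \<le> card (G1 \<inter> S) + c
                                  \<and> card (G1 \<inter> S) \<le> card (G2 \<inter> S) + c}"
    by auto
  ultimately show ?thesis
    using card_near_balanced_subsets_le[OF assms, of c] \<open>finite G\<close> by (simp add: card_Pow)
qed

text \<open>The agent \<open>agent i S\<close> lies in group \<open>i + 1\<close> and values exactly the goods in \<open>S\<close>;
  the parity of its code records the group.\<close>

definition agent :: "nat \<Rightarrow> nat set \<Rightarrow> nat" where
  "agent i S = 2 * set_encode S + i"

definition approval_utils :: "nat \<Rightarrow> nat \<Rightarrow> nat" where
  "approval_utils a g = (if g \<in> set_decode (a div 2) then 1 else 0)"

lemma approval_utils_agent:
  "finite S \<Longrightarrow> i < 2 \<Longrightarrow> approval_utils (agent i S) g = (if g \<in> S then 1 else 0)"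
  by (simp add: approval_utils_def agent_def)

lemma inj_on_agent: "i < 2 \<Longrightarrow> inj_on (agent i) (Collect finite)"
  by (rule inj_on_inverseI[where g = "\<lambda>a. set_decode (a div 2)"]) (simp add: agent_def)

lemma agents_disjoint: "agent 0 ` X \<inter> agent 1 ` Y = {}"
proof -
  have "agent 0 S \<noteq> agent 1 T" for S T
    unfolding agent_def by presburger
  then show ?thesis by blast
qed

lemma inj_on_agent_Pow: "finite G \<Longrightarrow> i < 2 \<Longrightarrow> inj_on (agent i) (Pow G)"
  by (rule inj_on_subset[OF inj_on_agent]) (auto intro: finite_subset)

lemma card_agents: "finite G \<Longrightarrow> i < 2 \<Longrightarrow> card (agent i ` Pow G) = 2 ^ card G"
  by (simp add: card_image inj_on_agent_Pow card_Pow)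

lemma card_EFc_agents:
  assumes "finite G" "finite X" "finite Y" "i < 2"
  shows "card {a \<in> agent i ` Pow G. EFc c approval_utils a X Y}
           = card {S \<in> Pow G. card (Y \<inter> S) \<le> card (X \<inter> S) + c}"
proof -
  have "EFc c approval_utils (agent i S) X Y \<longleftrightarrow> card (Y \<inter> S) \<le> card (X \<inter> S) + c"
    if "S \<in> Pow G" for S
    using that assms finite_subset by (intro EFc_indicator_iff approval_utils_agent) auto
  then have "{a \<in> agent i ` Pow G. EFc c approval_utils a X Y}
               = agent i ` {S \<in> Pow G. card (Y \<inter> S) \<le> card (X \<inter> S) + c}"
    by auto
  moreover have "inj_on (agent i) {S \<in> Pow G. card (Y \<inter> S) \<le> card (X \<inter> S) + c}"
    using inj_on_agent_Pow[OF assms(1,4)] by (rule inj_on_subset) blast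
  ultimately show ?thesis by (simp add: card_image)
qed

lemma not_democratic_EFc:
  assumes "finite G" "is_allocation G G1 G2"
    and small: "real ((2 * c + 1) * (card G choose (card G div 2))) < (2 * h - 1) * 2 ^ card G"
  shows "\<not> democratic_fair (EFc c approval_utils) h (agent 0 ` Pow G) (agent 1 ` Pow G) G1 G2"
proof
  assume fair: "democratic_fair (EFc c approval_utils) h (agent 0 ` Pow G) (agent 1 ` Pow G) G1 G2"
  let ?F1 = "{S \<in> Pow G. card (G2 \<inter> S) \<le> card (G1 \<inter> S) + c}"
  let ?F2 = "{S \<in> Pow G. card (G1 \<inter> S) \<le> card (G2 \<inter> S) + c}"
  have part: "G1 \<union> G2 = G" "G1 \<inter> G2 = {}"
    using \<open>is_allocation G G1 G2\<close> by (auto simp: is_allocation_def)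
  then have "finite G1" "finite G2" using \<open>finite G\<close> by auto
  then have "card {a \<in> agent 0 ` Pow G. EFc c approval_utils a G1 G2} = card ?F1"
            "card {a \<in> agent 1 ` Pow G. EFc c approval_utils a G2 G1} = card ?F2"
    using \<open>finite G\<close> by (simp_all add: card_EFc_agents)
  moreover have "card (agent 0 ` Pow G) = 2 ^ card G" "card (agent 1 ` Pow G) = 2 ^ card G"
    using \<open>finite G\<close> by (simp_all add: card_agents)
  ultimately have "h * 2 ^ card G \<le> card ?F1" "h * 2 ^ card G \<le> card ?F2"
    using fair unfolding democratic_fair_def by simp_all
  moreover have "card ?F1 + card ?F2 \<le> 2 ^ card G + (2 * c + 1) * (card G choose (card G div 2))"
    using card_bounded_imbalance_subsets_sum_le[OF \<open>finite G\<close> part] .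
  then have "real (card ?F1) + real (card ?F2)
               \<le> 2 ^ card G + real ((2 * c + 1) * (card G choose (card G div 2)))"
    unfolding of_nat_le_iff[symmetric, where 'a = real] by (simp only: of_nat_add of_nat_power of_nat_numeral)
  moreover have "(2 * h - 1) * 2 ^ card G = 2 * (h * 2 ^ card G) - 2 ^ card G"
    by (simp only: left_diff_distrib mult.assoc mult_1)
  ultimately show False
    using small by linarith
qed

lemma not_democratic_PROPc:
  assumes "finite G" "is_allocation G G1 G2"
    and "real ((2 * c + 1) * (card G choose (card G div 2))) < (2 * h - 1) * 2 ^ card G"
  shows "\<not> democratic_fair (PROPc c approval_utils) h (agent 0 ` Pow G) (agent 1 ` Pow G) G1 G2"
proof -
  have "G1 \<inter> G2 = {}" "finite G1" "finite G2"
    using assms(1,2) by (auto simp: is_allocation_def)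
  then have "PROPc c approval_utils a G1 G2 = EFc c approval_utils a G1 G2"
            "PROPc c approval_utils a G2 G1 = EFc c approval_utils a G2 G1" for a
    by (simp_all add: PROPc_iff_EFc Int_commute)
  then show ?thesis
    using not_democratic_EFc[OF assms] unfolding democratic_fair_def by simp
qed

theorem mainTheorem5:
  fixes c :: nat and h :: real
  assumes "c \<ge> 1" and "h > 1/2"
  shows "\<exists>(G::nat set) (A1::nat set) (A2::nat set) (u::nat \<Rightarrow> nat \<Rightarrow> nat).
           finite G \<and> finite A1 \<and> finite A2 \<and> A1 \<noteq> {} \<and> A2 \<noteq> {} \<and> A1 \<inter> A2 = {} \<and>
           binary_utils u (A1 \<union> A2) G \<and>
           (\<forall>G1 G2. is_allocation G G1 G2 \<longrightarrow>
              \<not> democratic_fair (\<lambda>a Gi Go. PROPc c u a Gi Go) h A1 A2 G1 G2) \<and>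
           (\<forall>G1 G2. is_allocation G G1 G2 \<longrightarrow>
              \<not> democratic_fair (\<lambda>a Gi Go. EFc c u a Gi Go) h A1 A2 G1 G2)"
proof -
  obtain n where n: "real (2 * c + 1) * real ((2 * n) choose n) < (2 * h - 1) * 4 ^ n"
    using exists_central_binomial_small[where K = "2 * c + 1" and e = "2 * h - 1"] assms(2) by auto
  define G where "G = {..<2 * n}"
  have "finite G" by (simp add: G_def)
  have small: "real ((2 * c + 1) * (card G choose (card G div 2))) < (2 * h - 1) * 2 ^ card G"
    using n by (simp add: G_def power_mult ring_distribs)
  show ?thesis
  proof (rule exI[of _ G], rule exI[of _ "agent 0 ` Pow G"], rule exI[of _ "agent 1 ` Pow G"],
      rule exI[of _ approval_utils], intro conjI allI impI)
    show "binary_utils approval_utils (agent 0 ` Pow G \<union> agent 1 ` Pow G) G"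
      by (simp add: binary_utils_def approval_utils_def)
  next
    fix G1 G2
    assume "is_allocation G G1 G2"
    then show "\<not> democratic_fair (PROPc c approval_utils) h (agent 0 ` Pow G) (agent 1 ` Pow G) G1 G2"
      using not_democratic_PROPc \<open>finite G\<close> small by blast
  next
    fix G1 G2
    assume "is_allocation G G1 G2"
    then show "\<not> democratic_fair (EFc c approval_utils) h (agent 0 ` Pow G) (agent 1 ` Pow G) G1 G2"
      using not_democratic_EFc \<open>finite G\<close> small by blast
  qed (use \<open>finite G\<close> agents_disjoint in auto)
qed

end
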